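(* For integers $k\ge1$ and $n\ge1$, let $c(k,n)$ be the minimum, over all deterministic algorithms that sort $n$ elements in the rank query model in $k$ rounds, of the maximum over inputs of the total number of queries asked. Then $$c(k,n)\ \ge\ \frac{k}{2e}\,n^{1+1/k}-kn.$$
   Context: Rank query model for sorting: there are $n$ items $x_1,\ldots,x_n$ whose ranks $\mathrm{rank}(x_1),\ldots,\mathrm{rank}(x_n)$ form an unknown permutation of $\{1,\ldots,n\}$. A query is a pair $(i,m)$ with $i,m\in\{1,\ldots,n\}$ and asks "How is $\mathrm{rank}(x_i)$ compared to $m$?", with answer "$<$", "$=$" or "$>$". Sorting means determining the rank of every item. An algorithm runs in $k$ rounds if in each of $k$ rounds it submits a set of queries chosen depending only on answers of earlier rounds, then receives all their answers. *)

theory Defs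
  imports Complex_Main
begin

text \<open>Items are indexed by 1..n; an input is a permutation
  of ranks, represented as a function r with r restricted to {1..n} a bijection
  onto {1..n}, and r i = 0 outside {1..n} (canonical representative).\<close>

datatype answer = Lt | Eq | Gt

definition inputs :: "nat \<Rightarrow> (nat \<Rightarrow> nat) set" where
  "inputs n = {r. bij_betw r {1..n} {1..n} \<and> (\<forall>i. i \<notin> {1..n} \<longrightarrow> r i = 0)}"

fun ans :: "(nat \<Rightarrow> nat) \<Rightarrow> nat \<times> nat \<Rightarrow> answer" where
  "ans r (i, m) = (if r i < m then Lt else if r i = m then Eq else Gt)"

text \<open>A deterministic adaptive algorithm: in round j it submits the query set
  A j H, where H is the partial map of all answers received in earlier rounds.\<close>

type_synonym algorithm = "nat \<Rightarrow> ((nat \<times> nat) \<Rightarrow> answer option) \<Rightarrow> (nat \<times> nat) set"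

fun hist :: "algorithm \<Rightarrow> (nat \<Rightarrow> nat) \<Rightarrow> nat \<Rightarrow> ((nat \<times> nat) \<Rightarrow> answer option)" where
  "hist A r 0 = Map.empty"
| "hist A r (Suc j) = hist A r j ++
      (\<lambda>q. if q \<in> A j (hist A r j) then Some (ans r q) else None)"

definition cost :: "algorithm \<Rightarrow> (nat \<Rightarrow> nat) \<Rightarrow> nat \<Rightarrow> nat" where
  "cost A r k = (\<Sum>j<k. card (A j (hist A r j)))"

definition sorts_in_rounds :: "nat \<Rightarrow> nat \<Rightarrow> algorithm \<Rightarrow> bool" where
  "sorts_in_rounds n k A \<longleftrightarrow>
     (\<forall>j H. A j H \<subseteq> {1..n} \<times> {1..n}) \<and>
     (\<forall>r\<in>inputs n. \<forall>r'\<in>inputs n. hist A r k = hist A r' k \<longrightarrow> r = r')"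

definition worst_cost :: "nat \<Rightarrow> nat \<Rightarrow> algorithm \<Rightarrow> nat" where
  "worst_cost n k A = Max ((\<lambda>r. cost A r k) ` inputs n)"

definition c :: "nat \<Rightarrow> nat \<Rightarrow> nat" where
  "c k n = Inf {worst_cost n k A | A. sorts_in_rounds n k A}"

end

theory Submission
  imports Defs "HOL-Combinatorics.Permutations" "HOL-Library.FuncSet" "HOL-Analysis.Convex"
begin

(* An adversary keeps, round by round, a largest class of inputs that the algorithm cannot yet
   tell apart.  If in round j item i is compared with the thresholds in a set M_i, the answers
   about item i only depend on where its rank lies relative to M_i, which leaves 2|M_i|+1
   possibilities; so the class shrinks at most by the factor prod_i (2|M_i|+1) per round.  After
   k rounds the class is a single input, hence n! <= prod_{j,i} (2 a_ji + 1) where the a_ji sum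
   to the cost.  AM-GM over these kn factors and n! >= (n/e)^n give
   2 cost + kn >= kn (n/e)^(1/k) >= k n^(1+1/k) / e. *)

lemma card_image_le_card_image_if_factors:
  assumes "finite (g ` A)" and "\<And>x y. x \<in> A \<Longrightarrow> y \<in> A \<Longrightarrow> g x = g y \<Longrightarrow> f x = f y"
  shows "card (f ` A) \<le> card (g ` A)"
proof -
  have "f x = f (inv_into A g (g x))" if "x \<in> A" for x
  proof (rule assms(2))
    show "inv_into A g (g x) \<in> A" "g x = g (inv_into A g (g x))"
      using that by (simp_all add: inv_into_into f_inv_into_f)
  qed fact
  then have "f ` A = (\<lambda>z. f (inv_into A g z)) ` g ` A"
    by (simp add: image_image cong: image_cong)
  then show ?thesis
    using assms(1) by (metis card_image_le)
qed

lemma pigeonhole_fibre: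
  assumes "finite C" and "C \<noteq> {}"
  obtains x where "x \<in> C" and "card C \<le> card {y \<in> C. g y = g x} * card (g ` C)"
proof -
  obtain v where "v \<in> g ` C" and "card C \<le> card (g -` {v} \<inter> C) * card (g ` C)"
    using pigeonhole_card[of g C "g ` C"] assms by auto
  then show ?thesis
    using that by (auto simp: vimage_def Int_def conj_commute)
qed

lemma card_eq_sum_card_Image:
  assumes "finite Q" and "Q \<subseteq> I \<times> UNIV" and "finite I"
  shows "card Q = (\<Sum>i\<in>I. card (Q `` {i}))"
proof -
  have "Q = Sigma I (\<lambda>i. Q `` {i})"
    using assms(2) by auto
  then have "card Q = card (Sigma I (\<lambda>i. Q `` {i}))"
    by (rule arg_cong)
  also have "\<dots> = (\<Sum>i\<in>I. card (Q `` {i}))"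
    using assms(1,3) by (intro card_SigmaI) auto
  finally show ?thesis .
qed

lemma fact_ge_power_div_exp: "(real n / exp 1) ^ n \<le> fact n"
proof -
  have exp_sums: "(\<lambda>i. real n ^ i / fact i) sums exp (real n)"
    using exp_converges[of "real n"] by (simp add: divide_inverse_commute scaleR_conv_of_real)
  have "(\<Sum>i\<in>{n}. real n ^ i / fact i) \<le> (\<Sum>i. real n ^ i / fact i)"
    by (rule sum_le_suminf) (use exp_sums in \<open>auto simp: sums_iff\<close>)
  then have "real n ^ n / fact n \<le> exp 1 ^ n"
    using exp_sums exp_of_nat_mult[of n "1::real"] by (simp add: sums_iff)
  then show ?thesis
    by (simp add: power_divide pos_divide_le_eq mult.commute)
qed

lemma sum_ge_if_prod_ge_fact:
  fixes b :: "nat \<Rightarrow> 'a \<Rightarrow> real"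
  assumes "k \<ge> 1" and "finite I" and "card I = n" and "n \<ge> 1"
    and nonneg: "\<And>j i. b j i \<ge> 0"
    and prod_ge: "fact n \<le> (\<Prod>j<k. \<Prod>i\<in>I. b j i)"
  shows "real k / (2 * exp 1) * real n powr (1 + 1 / real k) \<le> (\<Sum>j<k. \<Sum>i\<in>I. b j i) / 2"
proof -
  define S where "S = {..<k} \<times> I"
  have card_S: "card S = k * n"
    using assms(3) by (simp add: S_def card_cartesian_product)
  have "finite S"
    using assms(2) by (simp add: S_def)
  have "S \<noteq> {}"
    using card_S assms(1,4) by (intro notI) simp
  have prod_S: "(\<Prod>x\<in>S. case_prod b x) = (\<Prod>j<k. \<Prod>i\<in>I. b j i)"
    by (simp add: S_def prod.cartesian_product)
  have sum_S: "(\<Sum>x\<in>S. case_prod b x) = (\<Sum>j<k. \<Sum>i\<in>I. b j i)"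
    by (simp add: S_def sum.cartesian_product)
  have "(real n / exp 1) powr (1 / real k) = ((real n / exp 1) ^ n) powr (1 / real (card S))"
    using assms(1,4) by (simp add: card_S powr_powr flip: powr_realpow)
  also have "\<dots> \<le> (\<Prod>x\<in>S. case_prod b x) powr (1 / real (card S))"
    using fact_ge_power_div_exp[of n] prod_ge by (simp add: prod_S powr_mono2)
  also have "\<dots> \<le> (\<Sum>x\<in>S. case_prod b x / real (card S))"
    using \<open>finite S\<close> \<open>S \<noteq> {}\<close> nonneg by (intro arith_geom_mean) (auto split: prod.splits)
  also have "\<dots> = (\<Sum>j<k. \<Sum>i\<in>I. b j i) / (real k * real n)"
    by (simp add: sum_S card_S flip: sum_divide_distrib)
  finally have root_le_mean:
    "(real n / exp 1) powr (1 / real k) \<le> (\<Sum>j<k. \<Sum>i\<in>I. b j i) / (real k * real n)" .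
  have "exp 1 powr (1 / real k) \<le> exp 1"
    using assms(1) powr_mono[of "1 / real k" 1 "exp 1"] by simp
  then have "real n powr (1 / real k) / exp 1 \<le> (real n / exp 1) powr (1 / real k)"
    by (simp add: powr_divide frac_le)
  also note root_le_mean
  finally have "real n powr (1 / real k) / exp 1 \<le> (\<Sum>j<k. \<Sum>i\<in>I. b j i) / (real k * real n)" .
  moreover have "real n powr (1 + 1 / real k) = real n * real n powr (1 / real k)"
    using assms(4) by (simp add: powr_add)
  ultimately show ?thesis
    using assms(1,4) by (simp add: field_simps)
qed

lemma inputs_bij_permutations:
  "bij_betw (\<lambda>r i. if i \<in> {1..n} then r i else i) (inputs n) {p. p permutes {1..n}}"
proof (rule bij_betw_byWitness[where f'="\<lambda>p i. if i \<in> {1..n} then p i else 0"])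
  show "\<forall>r\<in>inputs n. (\<lambda>i. if i \<in> {1..n} then (if i \<in> {1..n} then r i else i) else 0) = r"
    by (auto simp: inputs_def)
  show "\<forall>p\<in>{p. p permutes {1..n}}. (\<lambda>i. if i \<in> {1..n} then (if i \<in> {1..n} then p i else 0) else i) = p"
    by (auto simp: permutes_def fun_eq_iff)
  show "(\<lambda>r i. if i \<in> {1..n} then r i else i) ` inputs n \<subseteq> {p. p permutes {1..n}}"
  proof safe
    fix r assume "r \<in> inputs n"
    then have "bij_betw (\<lambda>i. if i \<in> {1..n} then r i else i) {1..n} {1..n}"
      by (auto simp: inputs_def intro: bij_betw_cong[THEN iffD1, rotated])
    then show "(\<lambda>i. if i \<in> {1..n} then r i else i) permutes {1..n}"
      by (rule bij_imp_permutes) auto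
  qed
  show "(\<lambda>p i. if i \<in> {1..n} then p i else 0) ` {p. p permutes {1..n}} \<subseteq> inputs n"
  proof safe
    fix p assume "p permutes {1..n}"
    then have "bij_betw (\<lambda>i. if i \<in> {1..n} then p i else 0) {1..n} {1..n}"
      by (auto dest: permutes_imp_bij intro: bij_betw_cong[THEN iffD1, rotated])
    then show "(\<lambda>i. if i \<in> {1..n} then p i else 0) \<in> inputs n"
      by (auto simp: inputs_def)
  qed
qed

lemma finite_inputs: "finite (inputs n)"
  using bij_betw_finite[OF inputs_bij_permutations] finite_permutations[of "{1..n}"] by simp

lemma card_inputs: "card (inputs n) = fact n"
  using bij_betw_same_card[OF inputs_bij_permutations] card_permutations[of "{1..n}" n] by simp

(* Where v lies relative to the thresholds M: v itself if it is one, else the gap it falls into. *)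
definition code :: "nat set \<Rightarrow> nat \<Rightarrow> nat + nat" where
  "code M v = (if v \<in> M then Inl v else Inr (card {m\<in>M. m < v}))"

definition codes :: "nat set \<Rightarrow> (nat + nat) set" where
  "codes M = Inl ` M \<union> Inr ` {0..card M}"

lemma code_in_codes: "finite M \<Longrightarrow> code M v \<in> codes M"
  by (auto simp: code_def codes_def intro!: card_mono)

lemma card_codes_le: "card (codes M) \<le> 2 * card M + 1"
proof -
  have "card (codes M) \<le> card (Inl ` M :: (nat + nat) set) + card (Inr ` {0..card M} :: (nat + nat) set)"
    unfolding codes_def by (rule card_Un_le)
  also have "\<dots> = 2 * card M + 1"
    by (simp add: card_image)
  finally show ?thesis .
qed

lemma ans_eq_if_code_eq:
  assumes "finite M" and "code M (r i) = code M (r' i)" and "m \<in> M"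
  shows "ans r (i, m) = ans r' (i, m)"
proof (cases "r i \<in> M")
  case True
  then show ?thesis
    using assms(2) by (auto simp: code_def split: if_splits)
next
  case False
  then have "r' i \<notin> M" and card_eq: "card {m\<in>M. m < r i} = card {m\<in>M. m < r' i}"
    using assms(2) by (auto simp: code_def split: if_splits)
  have below_eq_if_le: "{m\<in>M. m < v} = {m\<in>M. m < w}"
    if "v \<le> w" and "card {m\<in>M. m < v} = card {m\<in>M. m < w}" for v w
    using that assms(1) by (intro card_subset_eq) auto
  have "{m\<in>M. m < r i} = {m\<in>M. m < r' i}"
  proof (cases "r i \<le> r' i")
    case True
    then show ?thesis using below_eq_if_le card_eq by blast
  next
    case False
    then show ?thesis using below_eq_if_le[of "r' i" "r i"] card_eq by simp
  qed
  then have "m < r i \<longleftrightarrow> m < r' i"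
    using assms(3) by blast
  moreover have "r i \<noteq> m" "r' i \<noteq> m"
    using assms(3) False \<open>r' i \<notin> M\<close> by auto
  ultimately show ?thesis
    by auto
qed

definition answer_bound :: "nat set \<Rightarrow> (nat \<times> nat) set \<Rightarrow> nat" where
  "answer_bound I Q = (\<Prod>i\<in>I. 2 * card (Q `` {i}) + 1)"

lemma card_answer_vectors_le:
  assumes "finite Q" and "Q \<subseteq> I \<times> UNIV" and "finite I"
  shows "card ((\<lambda>r. restrict (ans r) Q) ` R) \<le> answer_bound I Q"
proof -
  define item_codes where "item_codes r = (\<lambda>i\<in>I. code (Q `` {i}) (r i))" for r :: "nat \<Rightarrow> nat"
  have finite_Image: "finite (Q `` {i})" for i
    using assms(1) by simp
  have item_codes_in: "item_codes ` R \<subseteq> (\<Pi>\<^sub>E i\<in>I. codes (Q `` {i}))"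
    using code_in_codes[OF finite_Image] by (simp add: item_codes_def image_subset_iff)
  have finite_codes: "finite (\<Pi>\<^sub>E i\<in>I. codes (Q `` {i}))"
    using assms(3) finite_Image by (intro finite_PiE) (simp_all add: codes_def)
  have "card ((\<lambda>r. restrict (ans r) Q) ` R) \<le> card (item_codes ` R)"
  proof (rule card_image_le_card_image_if_factors)
    show "finite (item_codes ` R)"
      using item_codes_in finite_codes by (rule finite_subset)
    fix r r' assume same_codes: "item_codes r = item_codes r'"
    have "code (Q `` {i}) (r i) = code (Q `` {i}) (r' i)" if "i \<in> I" for i
      using fun_cong[OF same_codes, of i] that by (simp add: item_codes_def)
    then have "ans r (i, m) = ans r' (i, m)" if "(i, m) \<in> Q" for i m
      using that assms(2) by (intro ans_eq_if_code_eq[OF finite_Image]) auto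
    then show "restrict (ans r) Q = restrict (ans r') Q"
      by (auto simp: restrict_def fun_eq_iff)
  qed
  also have "\<dots> \<le> card (\<Pi>\<^sub>E i\<in>I. codes (Q `` {i}))"
    using item_codes_in finite_codes by (rule card_mono[rotated])
  also have "\<dots> \<le> answer_bound I Q"
    unfolding card_PiE[OF assms(3)] answer_bound_def using card_codes_le by (intro prod_mono) auto
  finally show ?thesis .
qed

lemma hist_Suc_eqI:
  assumes "hist A y j = hist A x j"
    and "restrict (ans y) (A j (hist A x j)) = restrict (ans x) (A j (hist A x j))"
  shows "hist A y (Suc j) = hist A x (Suc j)"
proof -
  let ?Q = "A j (hist A x j)"
  have "ans y q = ans x q" if "q \<in> ?Q" for q
    using assms(2) that by (metis restrict_apply')
  then have "(\<lambda>q. if q \<in> ?Q then Some (ans y q) else None) = (\<lambda>q. if q \<in> ?Q then Some (ans x q) else None)"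
    by auto
  then show ?thesis
    using assms(1) by simp
qed

lemma hist_answered:
  assumes "q \<in> A j (hist A r j)" and "j < k"
  shows "hist A r k q = Some (ans r q)"
  using assms(2)
proof (induction k)
  case (Suc k)
  then show ?case
    using assms(1) by (cases "j = k") (auto simp: map_add_def)
qed simp

definition indistinguishable :: "nat \<Rightarrow> algorithm \<Rightarrow> nat \<Rightarrow> (nat \<Rightarrow> nat) \<Rightarrow> (nat \<Rightarrow> nat) set" where
  "indistinguishable n A j r = {r' \<in> inputs n. \<forall>j'\<le>j. hist A r' j' = hist A r j'}"

lemma indistinguishable_refine:
  assumes "x \<in> indistinguishable n A j r"
  shows "{y \<in> indistinguishable n A j r. restrict (ans y) (A j (hist A r j)) = restrict (ans x) (A j (hist A r j))}
    \<subseteq> indistinguishable n A (Suc j) x"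
proof safe
  fix y assume y: "y \<in> indistinguishable n A j r"
    and same_answers: "restrict (ans y) (A j (hist A r j)) = restrict (ans x) (A j (hist A r j))"
  have hist_x: "\<And>j'. j' \<le> j \<Longrightarrow> hist A x j' = hist A r j'"
    using assms by (simp add: indistinguishable_def)
  have hist_y: "\<And>j'. j' \<le> j \<Longrightarrow> hist A y j' = hist A r j'"
    using y by (simp add: indistinguishable_def)
  have "hist A y (Suc j) = hist A x (Suc j)"
    using hist_x[of j] hist_y[of j] same_answers by (intro hist_Suc_eqI) simp_all
  then show "y \<in> indistinguishable n A (Suc j) x"
    using y hist_x hist_y by (auto simp: indistinguishable_def le_Suc_eq)
qed

lemma adversary_step:
  assumes legal: "\<And>j H. A j H \<subseteq> {1..n} \<times> {1..n}"
    and IH: "fact n \<le> card (indistinguishable n A j r) * (\<Prod>j'<j. answer_bound {1..n} (A j' (hist A r j')))"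
  shows "\<exists>x\<in>inputs n. fact n \<le> card (indistinguishable n A (Suc j) x) *
    (\<Prod>j'<Suc j. answer_bound {1..n} (A j' (hist A x j')))"
proof -
  define C where "C = indistinguishable n A j r"
  define Q where "Q = A j (hist A r j)"
  define answers where "answers y = restrict (ans y) Q" for y
  define W where "W = answer_bound {1..n} Q"
  have "finite C"
    using finite_inputs by (simp add: C_def indistinguishable_def)
  moreover have "C \<noteq> {}"
    using IH by (auto simp: C_def)
  ultimately obtain x where "x \<in> C"
    and fibre: "card C \<le> card {y \<in> C. answers y = answers x} * card (answers ` C)"
    by (rule pigeonhole_fibre)
  have card_answers: "card (answers ` C) \<le> W"
    unfolding answers_def W_def Q_def
    using legal[of j "hist A r j"] finite_subset[OF legal[of j "hist A r j"]]
    by (intro card_answer_vectors_le) auto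
  have card_fibre: "card {y \<in> C. answers y = answers x} \<le> card (indistinguishable n A (Suc j) x)"
    using indistinguishable_refine[OF \<open>x \<in> C\<close>[unfolded C_def]] finite_inputs
    by (intro card_mono) (auto simp: indistinguishable_def C_def answers_def Q_def)
  have weight_x: "(\<Prod>j'<Suc j. answer_bound {1..n} (A j' (hist A x j')))
      = W * (\<Prod>j'<j. answer_bound {1..n} (A j' (hist A r j')))"
    using \<open>x \<in> C\<close> by (simp add: C_def indistinguishable_def W_def Q_def)
  have "fact n \<le> card C * (\<Prod>j'<j. answer_bound {1..n} (A j' (hist A r j')))"
    using IH by (simp add: C_def)
  also have "\<dots> \<le> card (indistinguishable n A (Suc j) x) * W *
      (\<Prod>j'<j. answer_bound {1..n} (A j' (hist A r j')))"
    using fibre card_fibre card_answers by (intro mult_le_mono1) (meson le_trans mult_le_mono)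
  finally have "fact n \<le> card (indistinguishable n A (Suc j) x) *
      (\<Prod>j'<Suc j. answer_bound {1..n} (A j' (hist A x j')))"
    by (simp only: weight_x mult.assoc)
  moreover have "x \<in> inputs n"
    using \<open>x \<in> C\<close> by (simp add: C_def indistinguishable_def)
  ultimately show ?thesis
    by blast
qed

lemma adversary:
  assumes "\<And>j H. A j H \<subseteq> {1..n} \<times> {1..n}"
  shows "\<exists>r\<in>inputs n. fact n \<le> card (indistinguishable n A j r) *
    (\<Prod>j'<j. answer_bound {1..n} (A j' (hist A r j')))"
proof (induction j)
  case 0
  have "indistinguishable n A 0 r = inputs n" for r
    by (auto simp: indistinguishable_def)
  moreover have "inputs n \<noteq> {}"
    using card_inputs[of n] by auto
  ultimately show ?case
    by (auto simp: card_inputs)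
next
  case (Suc j)
  then obtain r where "fact n \<le> card (indistinguishable n A j r) *
      (\<Prod>j'<j. answer_bound {1..n} (A j' (hist A r j')))"
    by blast
  then show ?case
    by (rule adversary_step[OF assms])
qed

lemma sorts_in_rounds_imp_fact_le:
  assumes "sorts_in_rounds n k A"
  shows "\<exists>r\<in>inputs n. fact n \<le> (\<Prod>j<k. answer_bound {1..n} (A j (hist A r j)))"
proof -
  obtain r where "r \<in> inputs n" and fact_le: "fact n \<le> card (indistinguishable n A k r) *
      (\<Prod>j<k. answer_bound {1..n} (A j (hist A r j)))"
    using adversary[of A n k] assms by (auto simp: sorts_in_rounds_def)
  have "indistinguishable n A k r \<subseteq> {r}"
    using assms \<open>r \<in> inputs n\<close> by (auto simp: indistinguishable_def sorts_in_rounds_def)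
  then have "card (indistinguishable n A k r) \<le> 1"
    using card_mono[of "{r}" "indistinguishable n A k r"] by simp
  then have "card (indistinguishable n A k r) * (\<Prod>j<k. answer_bound {1..n} (A j (hist A r j)))
      \<le> (\<Prod>j<k. answer_bound {1..n} (A j (hist A r j)))"
    using mult_le_mono1 by fastforce
  then show ?thesis
    using \<open>r \<in> inputs n\<close> order_trans[OF fact_le] by blast
qed

lemma cost_eq_sum_card_Image:
  assumes "\<And>j H. A j H \<subseteq> {1..n} \<times> {1..n}"
  shows "cost A r k = (\<Sum>j<k. \<Sum>i\<in>{1..n}. card (A j (hist A r j) `` {i}))"
  unfolding cost_def
  using assms finite_subset[OF assms] by (intro sum.cong refl card_eq_sum_card_Image) auto

lemma sorts_in_rounds_all_queries:
  assumes "k \<ge> 1"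
  shows "sorts_in_rounds n k (\<lambda>j H. {1..n} \<times> {1..n})"
  unfolding sorts_in_rounds_def
proof (intro conjI ballI impI allI subset_refl)
  fix r r' assume r: "r \<in> inputs n" and r': "r' \<in> inputs n"
    and same_hist: "hist (\<lambda>j H. {1..n} \<times> {1..n}) r k = hist (\<lambda>j H. {1..n} \<times> {1..n}) r' k"
  show "r = r'"
  proof
    fix i show "r i = r' i"
    proof (cases "i \<in> {1..n}")
      case True
      then have "(i, r i) \<in> {1..n} \<times> {1..n}"
        using r by (auto simp: inputs_def bij_betw_def)
      then have "hist (\<lambda>j H. {1..n} \<times> {1..n}) s k (i, r i) = Some (ans s (i, r i))" for s
        using assms by (intro hist_answered[where j=0]) auto
      then have "ans r (i, r i) = ans r' (i, r i)"
        using same_hist by (metis option.inject)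
      then show ?thesis
        by (simp split: if_splits)
    qed (use r r' in \<open>simp add: inputs_def\<close>)
  qed
qed

lemma c_attained:
  assumes "k \<ge> 1"
  obtains A where "sorts_in_rounds n k A" and "c k n = worst_cost n k A"
proof -
  have "{worst_cost n k A | A. sorts_in_rounds n k A} \<noteq> {}"
    using sorts_in_rounds_all_queries[OF assms] by blast
  then have "c k n \<in> {worst_cost n k A | A. sorts_in_rounds n k A}"
    unfolding c_def by (rule Inf_nat_def1)
  then show ?thesis
    using that by blast
qed

theorem theorem6:
  fixes k n :: nat
  assumes "k \<ge> 1" and "n \<ge> 1"
  shows "real (c k n) \<ge> real k / (2 * exp 1) * real n powr (1 + 1 / real k) - real k * real n"
proof -
  obtain A where A: "sorts_in_rounds n k A" and c_eq: "c k n = worst_cost n k A"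
    using c_attained assms(1) by blast
  then obtain r where "r \<in> inputs n"
    and fact_le: "fact n \<le> (\<Prod>j<k. answer_bound {1..n} (A j (hist A r j)))"
    using sorts_in_rounds_imp_fact_le by blast
  define b where "b j i = real (2 * card (A j (hist A r j) `` {i}) + 1)" for j i
  have "real (fact n) \<le> real (\<Prod>j<k. answer_bound {1..n} (A j (hist A r j)))"
    using fact_le by (simp only: of_nat_le_iff)
  then have prod_b: "fact n \<le> (\<Prod>j<k. \<Prod>i\<in>{1..n}. b j i)"
    by (simp only: of_nat_fact of_nat_prod answer_bound_def b_def)
  have "real k / (2 * exp 1) * real n powr (1 + 1 / real k) \<le> (\<Sum>j<k. \<Sum>i\<in>{1..n}. b j i) / 2"
    by (rule sum_ge_if_prod_ge_fact[OF assms(1) finite_atLeastAtMost _ assms(2) _ prod_b])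
      (simp_all add: b_def)
  also have "(\<Sum>j<k. \<Sum>i\<in>{1..n}. b j i) = 2 * real (cost A r k) + real k * real n"
    using A by (simp add: b_def cost_eq_sum_card_Image[of A n] sorts_in_rounds_def sum.distrib sum_distrib_left)
  also have "(2 * real (cost A r k) + real k * real n) / 2 \<le> real (c k n) + real k * real n / 2"
    unfolding c_eq worst_cost_def using \<open>r \<in> inputs n\<close> finite_inputs by (auto intro!: Max_ge)
  finally have "real k / (2 * exp 1) * real n powr (1 + 1 / real k) \<le> real (c k n) + real k * real n / 2" .
  moreover have "0 \<le> real k * real n"
    by simp
  ultimately show ?thesis
    by linarith
qed

end
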